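(* Let $\mathrm P$ be a probability measure on $\mathbb{R}^d$ whose support $\mathcal X$ is a compact convex set with nonempty interior and which has a density $p$ satisfying $\lambda\le p\le\Lambda$ on $\mathcal X$ for some constants $0<\lambda\le\Lambda$. Then $$\lim_{R\to1^-}\mathrm d_H\big(\nabla\psi(R\,\mathbb B_d),\mathcal X\big)=0,$$ where $\nabla\psi(R\,\mathbb B_d)=\{\nabla\psi(\mathbf u):\mathbf u\in R\,\mathbb B_d,\ \psi\text{ differentiable at }\mathbf u\}$.
   Context: $\mathbb{B}_d$ is the open unit ball of $\mathbb{R}^d$ and $R\,\mathbb B_d$ the open ball of radius $R$ centered at $\mathbf 0$. $\mathrm U_d$ is the spherical uniform distribution on $\mathbb B_d$ (density $u_d(\mathbf x)=\frac{1}{a_d|\mathbf x|^{d-1}}$ on $\mathbb B_d\setminus\{\mathbf 0\}$, $a_d=2\pi^{d/2}/\Gamma(d/2)$). $\psi$ is the convex lsc function on $\mathbb B_d$, normalized by $\psi(\mathbf 0)=0$, whose a.e. gradient pushes $\mathrm U_d$ forward to $\mathrm P$ (McCann); $\nabla\psi=\mathbf Q_\pm$ is the center-outward quantile function. $\mathrm d_H(A,B)=\max\{\sup_{\mathbf a\in A}\inf_{\mathbf b\in B}|\mathbf a-\mathbf b|,\sup_{\mathbf b\in B}\inf_{\mathbf a\in A}|\mathbf a-\mathbf b|\}$ is the Hausdorff distance. *)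

theory Defs
  imports "HOL-Analysis.Analysis" "HOL-Probability.Probability"
begin

definition sphere_area :: "nat \<Rightarrow> real" where
  "sphere_area d = 2 * pi powr (real d / 2) / Gamma (real d / 2)"

definition spherical_uniform :: "'a::euclidean_space measure" where
  "spherical_uniform = density lborel
     (\<lambda>x. indicator (ball 0 1 - {0}) x *
          ennreal (1 / (sphere_area DIM('a) * norm x ^ (DIM('a) - 1))))"

definition msupport :: "'a::metric_space measure \<Rightarrow> 'a set" where
  "msupport M = {x. \<forall>e>0. emeasure M (ball x e) > 0}"

definition lsc_on :: "'a::topological_space set \<Rightarrow> ('a \<Rightarrow> real) \<Rightarrow> bool" where
  "lsc_on S f \<longleftrightarrow> (\<forall>x\<in>S. \<forall>t. t < f x \<longrightarrow> (\<forall>\<^sub>F y in at x within S. t < f y))"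

text \<open>Gradient of a real function at a point of differentiability (0 elsewhere).\<close>
definition grad :: "('a::euclidean_space \<Rightarrow> real) \<Rightarrow> 'a \<Rightarrow> 'a" where
  "grad f u = (if f differentiable (at u)
               then (SOME g. (f has_derivative (\<lambda>h. g \<bullet> h)) (at u)) else 0)"

definition hausdorff_dist :: "'a::metric_space set \<Rightarrow> 'a set \<Rightarrow> ereal" where
  "hausdorff_dist A B =
     max (SUP a\<in>A. INF b\<in>B. ereal (dist a b)) (SUP b\<in>B. INF a\<in>A. ereal (dist a b))"

end

theory Submission
  imports Defs
begin

text \<open>Gradients of the convex potential \<open>\<psi>\<close> are monotone, and almost every one of them lies
  in the compact convex support \<open>X\<close>. If the gradient \<open>g\<close> at some differentiable point \<open>u\<close> of
  the ball lay outside \<open>X\<close>, a hyperplane \<open>a \<bullet> x = b\<close> would separate \<open>g\<close> from \<open>X\<close>; on the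
  positive-measure set of points \<open>w\<close> close to \<open>u - s a\<close> with gradient in \<open>X\<close>, the monotonicity
  \<open>(\<nabla>\<psi> w - g) \<bullet> (w - u) \<ge> 0\<close> then fails. Hence \<open>\<nabla>\<psi>(ball 0 R) \<subseteq> X\<close> for every \<open>R < 1\<close>.
  Conversely, every ball around a point of \<open>X\<close> has positive \<open>P\<close>-mass, so its preimage under
  \<open>\<nabla>\<psi>\<close> has positive mass for the spherical uniform law and contains differentiable points
  of the open ball; by compactness finitely many of them, all inside some \<open>ball 0 R\<^sub>0\<close>
  with \<open>R\<^sub>0 < 1\<close>, approximate all of \<open>X\<close>.\<close>

lemma has_derivative_grad:
  fixes f :: "'a::euclidean_space \<Rightarrow> real"
  assumes "f differentiable (at u)"
  shows "(f has_derivative (\<lambda>h. grad f u \<bullet> h)) (at u)"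
proof -
  obtain D where D: "(f has_derivative D) (at u)"
    using assms unfolding differentiable_def by blast
  then have "D = (\<lambda>h. adjoint D 1 \<bullet> h)"
    using adjoint_clauses(2)[OF has_derivative_linear[OF D]] by (simp add: fun_eq_iff)
  with D have "\<exists>g. (f has_derivative (\<lambda>h. g \<bullet> h)) (at u)" by metis
  from someI_ex[OF this] show ?thesis
    unfolding grad_def using assms by simp
qed

lemma convex_on_above_tangent:
  fixes f :: "'a::real_normed_vector \<Rightarrow> real"
  assumes convex: "convex_on S f" and "u \<in> S" "w \<in> S"
    and deriv: "(f has_derivative D) (at u within S)"
  shows "D (w - u) \<le> f w - f u"
proof -
  define \<gamma> where "\<gamma> t = u + t *\<^sub>R (w - u)" for t :: real
  have "\<gamma> ` {0..1} \<subseteq> S"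
    using convex_onD[OF convex] convex_on_imp_convex[OF convex] \<open>u \<in> S\<close> \<open>w \<in> S\<close>
    unfolding \<gamma>_def convex_alt by (auto simp: algebra_simps)
  then have "(f has_derivative D) (at (\<gamma> 0) within \<gamma> ` {0..1})"
    using has_derivative_subset[OF deriv] by (simp add: \<gamma>_def)
  moreover have "(\<gamma> has_derivative (\<lambda>t. t *\<^sub>R (w - u))) (at 0 within {0..1})"
    unfolding \<gamma>_def by (auto intro!: derivative_eq_intros)
  ultimately have "((f \<circ> \<gamma>) has_derivative (D \<circ> (\<lambda>t. t *\<^sub>R (w - u)))) (at 0 within {0..1})"
    using diff_chain_within by blast
  moreover have "D \<circ> (\<lambda>t. t *\<^sub>R (w - u)) = (*) (D (w - u))"
    using linear_cmul[OF has_derivative_linear[OF deriv]] by (simp add: fun_eq_iff)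
  ultimately have "((f \<circ> \<gamma>) has_field_derivative D (w - u)) (at 0 within {0..1})"
    by (simp add: has_field_derivative_def)
  then have "((\<lambda>t. (f (\<gamma> t) - f u) / t) \<longlongrightarrow> D (w - u)) (at_right 0)"
    by (simp add: has_field_derivative_iff at_within_Icc_at_right \<gamma>_def)
  moreover have "\<forall>\<^sub>F t in at_right 0. (f (\<gamma> t) - f u) / t \<le> f w - f u"
    using eventually_at_right_real[OF zero_less_one]
  proof eventually_elim
    case (elim t)
    have "f (\<gamma> t) \<le> (1 - t) * f u + t * f w"
      using convex_onD[OF convex, of t u w] elim \<open>u \<in> S\<close> \<open>w \<in> S\<close>
      by (simp add: \<gamma>_def algebra_simps)
    with elim show ?case by (simp add: divide_simps algebra_simps)
  qed
  ultimately show ?thesis by (intro tendsto_upperbound) auto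
qed

lemma convex_on_grad_monotone:
  fixes f :: "'a::euclidean_space \<Rightarrow> real"
  assumes "convex_on S f" "u \<in> S" "w \<in> S" "f differentiable (at u)" "f differentiable (at w)"
  shows "0 \<le> (grad f w - grad f u) \<bullet> (w - u)"
proof -
  have "grad f u \<bullet> (w - u) \<le> f w - f u" "grad f w \<bullet> (u - w) \<le> f u - f w"
    using assms has_derivative_grad
    by (blast intro: convex_on_above_tangent has_derivative_at_withinI)+
  then show ?thesis by (simp add: inner_diff_left inner_diff_right)
qed

lemma convex_on_grad_monotone_shifted:
  fixes f :: "'a::euclidean_space \<Rightarrow> real"
  assumes "convex_on S f" "u \<in> S" "w \<in> S" "f differentiable (at u)" "f differentiable (at w)"
  shows "s * (a \<bullet> (grad f w - grad f u)) \<le> norm (grad f w - grad f u) * norm (w - (u - s *\<^sub>R a))"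
proof -
  have "s * (a \<bullet> (grad f w - grad f u))
        \<le> s * (a \<bullet> (grad f w - grad f u)) + (grad f w - grad f u) \<bullet> (w - u)"
    using convex_on_grad_monotone[OF assms] by simp
  also have "\<dots> = (grad f w - grad f u) \<bullet> (w - (u - s *\<^sub>R a))"
    by (simp add: algebra_simps inner_commute)
  also have "\<dots> \<le> norm (grad f w - grad f u) * norm (w - (u - s *\<^sub>R a))"
    by (rule norm_cauchy_schwarz)
  finally show ?thesis .
qed

lemma convex_on_grad_in_compact_convex:
  fixes f :: "'a::euclidean_space \<Rightarrow> real"
  assumes convex: "convex_on S f" and "open S"
    and X: "compact X" "convex X"
    and good: "\<And>c r. 0 < r \<Longrightarrow> ball c r \<subseteq> S \<Longrightarrow>
                 \<exists>w\<in>ball c r. f differentiable (at w) \<and> grad f w \<in> X"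
    and u: "u \<in> S" "f differentiable (at u)"
  shows "grad f u \<in> X"
proof (rule ccontr)
  define g where "g = grad f u"
  assume "grad f u \<notin> X"
  then obtain a b where ab: "a \<bullet> g < b" "\<And>x. x \<in> X \<Longrightarrow> b < a \<bullet> x"
    using separating_hyperplane_closed_point[OF X(2) compact_imp_closed[OF X(1)]]
    unfolding g_def by blast
  obtain M where M: "0 < M" "\<And>x. x \<in> X \<Longrightarrow> norm x \<le> M"
    using compact_imp_bounded[OF X(1)] unfolding bounded_pos by blast
  obtain \<epsilon> where \<epsilon>: "0 < \<epsilon>" "ball u \<epsilon> \<subseteq> S"
    using \<open>open S\<close> u(1) open_contains_ball by blast
  define \<eta> where "\<eta> = b - a \<bullet> g"
  define s where "s = \<epsilon> / (2 * (norm a + 1))"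
  define r where "r = min (\<epsilon> / 2) (s * \<eta> / (M + norm g))"
  have \<eta>: "0 < \<eta>" using ab(1) by (simp add: \<eta>_def)
  have "0 < norm a + 1" by (simp add: add_nonneg_pos)
  then have s: "0 < s" "s * norm a < \<epsilon> / 2"
    using \<epsilon>(1) by (simp_all add: s_def field_simps)
  have Mg: "0 < M + norm g" using M(1) by (simp add: add_pos_nonneg)
  have r: "0 < r" "r \<le> \<epsilon> / 2" "r \<le> s * \<eta> / (M + norm g)"
    unfolding r_def using \<epsilon>(1) s(1) \<eta> Mg by (simp_all only: min.cobounded1 min.cobounded2) simp
  have rM: "(M + norm g) * r \<le> s * \<eta>"
    using Mg r(3) by (simp add: pos_le_divide_eq mult.commute)
  text \<open>Gradients at points near \<open>u - s a\<close> lie in \<open>X\<close>, so their \<open>a\<close>-component exceeds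
    that of \<open>g\<close> by \<open>\<eta>\<close>; this contradicts monotonicity of the gradient.\<close>
  define c where "c = u - s *\<^sub>R a"
  have "ball c r \<subseteq> ball u \<epsilon>"
    using s r(2) by (auto simp: ball_subset_ball_iff c_def dist_norm)
  then obtain w where w: "w \<in> ball c r" "f differentiable (at w)" "grad f w \<in> X"
    using good[OF r(1)] \<epsilon>(2) by blast
  have "s * \<eta> < s * (a \<bullet> (grad f w - g))"
    using ab(2)[OF w(3)] s(1) by (simp add: \<eta>_def inner_diff_right)
  also have "\<dots> \<le> norm (grad f w - g) * norm (w - c)"
    using convex_on_grad_monotone_shifted[OF convex u(1) _ u(2) w(2)] w(1) \<epsilon>(2)
      \<open>ball c r \<subseteq> ball u \<epsilon>\<close>
    unfolding g_def c_def by blast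
  also have "\<dots> \<le> (M + norm g) * r"
    using M(1) M(2)[OF w(3)] w(1) norm_triangle_ineq4[of "grad f w" g]
    by (intro mult_mono) (auto simp: dist_norm norm_minus_commute)
  also have "\<dots> \<le> s * \<eta>" by (rule rM)
  finally show False by simp
qed

lemma hausdorff_dist_nonneg:
  fixes A B :: "'a::metric_space set"
  assumes "B \<noteq> {}"
  shows "0 \<le> hausdorff_dist A B"
proof -
  obtain b where "b \<in> B" using assms by blast
  have "0 \<le> (INF a\<in>A. ereal (dist a b))" by (intro INF_greatest) simp
  also have "\<dots> \<le> (SUP b\<in>B. INF a\<in>A. ereal (dist a b))"
    using \<open>b \<in> B\<close> by (rule SUP_upper)
  finally show ?thesis unfolding hausdorff_dist_def by (simp add: le_max_iff_disj)
qed

lemma hausdorff_dist_le: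
  fixes A B :: "'a::metric_space set"
  assumes "\<And>a. a \<in> A \<Longrightarrow> \<exists>b\<in>B. dist a b \<le> e"
    and "\<And>b. b \<in> B \<Longrightarrow> \<exists>a\<in>A. dist a b \<le> e"
  shows "hausdorff_dist A B \<le> ereal e"
  unfolding hausdorff_dist_def
proof (intro max.boundedI SUP_least)
  fix a assume "a \<in> A"
  then obtain b where "b \<in> B" "dist a b \<le> e" using assms(1) by blast
  then show "(INF b\<in>B. ereal (dist a b)) \<le> ereal e" by (intro INF_lower2) auto
next
  fix b assume "b \<in> B"
  then obtain a where "a \<in> A" "dist a b \<le> e" using assms(2) by blast
  then show "(INF a\<in>A. ereal (dist a b)) \<le> ereal e" by (intro INF_lower2) auto
qed

lemma compact_approx_radius_lt_1:
  fixes G :: "'a::real_normed_vector \<Rightarrow> 'b::metric_space"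
  assumes "compact X" "0 < e"
    and approx: "\<And>x e. x \<in> X \<Longrightarrow> 0 < e \<Longrightarrow> \<exists>w. norm w < 1 \<and> Q w \<and> dist x (G w) < e"
  obtains R0 where "R0 < 1" "\<And>x. x \<in> X \<Longrightarrow> \<exists>w. norm w \<le> R0 \<and> Q w \<and> dist x (G w) < e"
proof -
  have "X \<subseteq> (\<Union>t\<in>X. ball t (e/2))" using \<open>0 < e\<close> by auto
  with compactE_image[OF \<open>compact X\<close>, of X "\<lambda>t. ball t (e/2)"]
  obtain T where T: "T \<subseteq> X" "finite T" "X \<subseteq> (\<Union>t\<in>T. ball t (e/2))"
    by blast
  have "\<forall>t\<in>T. \<exists>w. norm w < 1 \<and> Q w \<and> dist t (G w) < e/2"
    using approx T(1) \<open>0 < e\<close> by (meson half_gt_zero subsetD)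
  then obtain W where W: "\<And>t. t \<in> T \<Longrightarrow> norm (W t) < 1 \<and> Q (W t) \<and> dist t (G (W t)) < e/2"
    by metis
  define R0 where "R0 = Max (insert 0 ((\<lambda>t. norm (W t)) ` T))"
  show thesis
  proof
    show "R0 < 1" unfolding R0_def using T(2) W by (subst Max_less_iff) auto
    fix x assume "x \<in> X"
    then obtain t where t: "t \<in> T" "dist t x < e/2" using T(3) by auto
    have "norm (W t) \<le> R0" unfolding R0_def using T(2) t(1) by (intro Max_ge) auto
    moreover have "dist x (G (W t)) < e"
      using dist_triangle[of x "G (W t)" t] W[OF t(1)] t(2) by (simp add: dist_commute)
    ultimately show "\<exists>w. norm w \<le> R0 \<and> Q w \<and> dist x (G w) < e" using W[OF t(1)] by blast
  qed
qed

lemma hausdorff_dist_image_ball_tendsto: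
  fixes G :: "'a::real_normed_vector \<Rightarrow> 'b::metric_space"
  assumes "compact X" "X \<noteq> {}"
    and into: "\<And>u. norm u < 1 \<Longrightarrow> Q u \<Longrightarrow> G u \<in> X"
    and approx: "\<And>x e. x \<in> X \<Longrightarrow> 0 < e \<Longrightarrow> \<exists>w. norm w < 1 \<and> Q w \<and> dist x (G w) < e"
  shows "((\<lambda>R. hausdorff_dist (G ` {u \<in> ball 0 R. Q u}) X) \<longlongrightarrow> 0) (at_left 1)"
proof (rule order_tendstoI)
  fix y :: ereal assume "y < 0"
  then show "\<forall>\<^sub>F R in at_left 1. y < hausdorff_dist (G ` {u \<in> ball 0 R. Q u}) X"
    using hausdorff_dist_nonneg[OF \<open>X \<noteq> {}\<close>]
    by (intro always_eventually allI) (auto intro: less_le_trans)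
next
  fix y :: ereal assume "0 < y"
  then obtain e where e: "0 < e" "ereal e < y" using ereal_dense2 by force
  obtain R0 where R0: "R0 < 1" "\<And>x. x \<in> X \<Longrightarrow> \<exists>w. norm w \<le> R0 \<and> Q w \<and> dist x (G w) < e"
    using compact_approx_radius_lt_1[OF \<open>compact X\<close> e(1) approx] by blast
  show "\<forall>\<^sub>F R in at_left 1. hausdorff_dist (G ` {u \<in> ball 0 R. Q u}) X < y"
    using eventually_at_left_real[OF R0(1)]
  proof eventually_elim
    case (elim R)
    have "hausdorff_dist (G ` {u \<in> ball 0 R. Q u}) X \<le> ereal e"
    proof (rule hausdorff_dist_le)
      fix a assume "a \<in> G ` {u \<in> ball 0 R. Q u}"
      with elim into \<open>0 < e\<close> show "\<exists>b\<in>X. dist a b \<le> e" by force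
    next
      fix x assume "x \<in> X"
      with R0(2) elim show "\<exists>a\<in>G ` {u \<in> ball 0 R. Q u}. dist a x \<le> e"
        by (force simp: dist_commute)
    qed
    then show ?case using e(2) by (rule le_less_trans)
  qed
qed

lemma AE_in_msupport:
  fixes M :: "'a::{metric_space,second_countable_topology} measure"
  assumes "sets M = sets borel"
  shows "AE x in M. x \<in> msupport M"
proof -
  obtain \<B> :: "'a set set" where \<B>: "countable \<B>" "\<And>C. C \<in> \<B> \<Longrightarrow> open C"
    "\<And>S. open S \<Longrightarrow> \<exists>U\<subseteq>\<B>. S = \<Union>U"
    using univ_second_countable by blast
  define N where "N = (\<Union>C\<in>{C\<in>\<B>. emeasure M C = 0}. C)"
  have "N \<in> null_sets M"
    unfolding N_def using \<B>(1,2) assms by (intro null_sets_UN') (auto intro: null_setsI)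
  moreover have "- msupport M \<subseteq> N"
  proof
    fix x assume "x \<in> - msupport M"
    then obtain e where e: "0 < e" "emeasure M (ball x e) = 0"
      unfolding msupport_def by (auto simp: not_gr_zero)
    obtain U where U: "U \<subseteq> \<B>" "ball x e = \<Union>U" using \<B>(3)[of "ball x e"] by auto
    then obtain C where C: "C \<in> U" "x \<in> C" using e(1) by (metis UnionE centre_in_ball)
    then have "C \<subseteq> ball x e" using U(2) by auto
    then have "emeasure M C = 0"
      using emeasure_mono[of C "ball x e" M] assms e(2) by simp
    with C U(1) show "x \<in> N" unfolding N_def by blast
  qed
  ultimately show ?thesis by (intro AE_I'[of N]) auto
qed

text \<open>The gradient map is not known to be measurable, so \<open>emeasure_distr\<close> does not apply.
  Still, a \<open>distr\<close> that is not the zero measure was built from the preimage set function, which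
  then must have been a measure.\<close>
lemma emeasure_distr_nonmeasurable:
  assumes "emeasure (distr M N f) (space N) \<noteq> 0" "B \<in> sets N"
  shows "emeasure (distr M N f) B = emeasure M (f -` B \<inter> space M)"
proof -
  have "measure_space (space N) (sigma_sets (space N) (sets N)) (\<lambda>A. emeasure M (f -` A \<inter> space M))"
    using assms(1) unfolding distr_def emeasure_measure_of_conv by (auto split: if_splits)
  then show ?thesis
    using sigma_sets.Basic[OF assms(2)] unfolding distr_def emeasure_measure_of_conv by simp
qed

lemma AE_vimage_distr:
  assumes "prob_space (distr M N f)" "f \<in> space M \<rightarrow> space N"
    and "B \<in> sets N" "AE y in distr M N f. y \<in> B"
  shows "AE x in M. f x \<in> B"
proof -
  interpret D: prob_space "distr M N f" by fact
  have "emeasure (distr M N f) (space N) \<noteq> 0" using D.emeasure_space_1 by simp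
  note emeasure_vimage = emeasure_distr_nonmeasurable[OF this]
  have "f -` space N \<inter> space M = space M" using assms(2) by auto
  then have M1: "emeasure M (space M) = 1"
    using emeasure_vimage[of "space N"] D.emeasure_space_1 by simp
  have B1: "emeasure M (f -` B \<inter> space M) = 1"
    using emeasure_vimage[OF assms(3)] D.emeasure_eq_1_AE assms(3,4) by simp
  then have "f -` B \<inter> space M \<in> sets M" by (intro emeasure_neq_0_sets) simp
  then have "emeasure M (space M - (f -` B \<inter> space M)) = 0"
    using emeasure_compl[of "f -` B \<inter> space M" M] M1 B1 by simp
  moreover have "{x \<in> space M. f x \<notin> B} = space M - (f -` B \<inter> space M)" by auto
  ultimately show ?thesis
    using \<open>f -` B \<inter> space M \<in> sets M\<close> by (intro AE_I'[of "space M - (f -` B \<inter> space M)"]) auto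
qed

lemma AE_imp_ex_in_pos_emeasure:
  assumes "AE x in M. P x" "0 < emeasure M A"
  shows "\<exists>x\<in>A. P x"
proof (rule ccontr)
  assume none: "\<not> (\<exists>x\<in>A. P x)"
  obtain N where N: "{x \<in> space M. \<not> P x} \<subseteq> N" "emeasure M N = 0" "N \<in> sets M"
    using assms(1) by (rule AE_E)
  have "A \<in> sets M" using assms(2) by (intro emeasure_neq_0_sets) simp
  then have "A \<subseteq> N" using sets.sets_into_space[of A M] none N(1) by blast
  then have "emeasure M A \<le> 0" using emeasure_mono[OF _ N(3)] N(2) by metis
  with assms(2) show False by simp
qed

lemma sphere_area_pos: "0 < n \<Longrightarrow> 0 < sphere_area n"
  unfolding sphere_area_def by (auto intro!: divide_pos_pos Gamma_real_pos)

lemma spherical_uniform_density_measurable: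
  "(\<lambda>x::'a::euclidean_space. indicator (ball 0 1 - {0}) x *
     ennreal (1 / (sphere_area DIM('a) * norm x ^ (DIM('a) - 1)))) \<in> borel_measurable lborel"
proof -
  have "(\<lambda>x::'a. ennreal (1 / (sphere_area DIM('a) * norm x ^ (DIM('a) - 1)))) \<in> borel_measurable lborel"
    by (intro measurable_compose[OF _ measurable_ennreal] borel_measurable_divide
        borel_measurable_times borel_measurable_power borel_measurable_const
        borel_measurable_norm measurable_ident_sets) auto
  then show ?thesis by (intro borel_measurable_times_ennreal borel_measurable_indicator) auto
qed

lemma space_spherical_uniform [simp]: "space spherical_uniform = UNIV"
  and sets_spherical_uniform [simp]: "sets spherical_uniform = sets borel"
  unfolding spherical_uniform_def by auto

lemma AE_spherical_uniform_ball: "AE x in spherical_uniform. x \<in> ball 0 1"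
  unfolding spherical_uniform_def
  by (subst AE_density[OF spherical_uniform_density_measurable]) (auto split: split_indicator)

lemma emeasure_spherical_uniform_ball_pos:
  fixes c :: "'a::euclidean_space"
  assumes "0 < r" "ball c r \<subseteq> ball 0 1"
  shows "0 < emeasure (spherical_uniform :: 'a measure) (ball c r)"
proof -
  define k where "k = 1 / sphere_area DIM('a)"
  have "0 < k" unfolding k_def using sphere_area_pos[of "DIM('a)"] by simp
  text \<open>On the unit ball the density \<open>1 / (a\<^sub>d |x|\<^sup>d\<^sup>-\<^sup>1)\<close> is at least \<open>k = 1 / a\<^sub>d\<close>.\<close>
  have "ennreal k * indicator (ball c r - {0}) x \<le>
        indicator (ball 0 1 - {0}) x * ennreal (1 / (sphere_area DIM('a) * norm x ^ (DIM('a) - 1))) *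
        indicator (ball c r) x" for x :: 'a
  proof (cases "x \<in> ball c r - {0}")
    case True
    then have x: "x \<in> ball 0 1 - {0}" using assms(2) by auto
    then have "0 < norm x" "norm x < 1" by auto
    then have "0 < norm x ^ (DIM('a) - 1)" "norm x ^ (DIM('a) - 1) \<le> 1"
      by (simp_all add: power_le_one)
    then have "k \<le> 1 / (sphere_area DIM('a) * norm x ^ (DIM('a) - 1))"
      unfolding k_def using sphere_area_pos[of "DIM('a)"]
      by (simp add: divide_simps mult_le_cancel_left1)
    with True x show ?thesis by (simp add: ennreal_leI)
  qed auto
  then have "ennreal k * emeasure lborel (ball c r - {0}) \<le> emeasure spherical_uniform (ball c r)"
    unfolding spherical_uniform_def
    by (subst emeasure_density[OF spherical_uniform_density_measurable], simp,
        subst nn_integral_cmult_indicator[symmetric], simp, rule nn_integral_mono)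
  moreover have "emeasure lborel (ball c r - {0}) = emeasure lborel (ball c r)"
    by (rule emeasure_Diff_null_set) auto
  moreover have "0 < emeasure lborel (ball c r)"
    using assms(1) emeasure_lborel_ball_finite[of c r]
    by (simp add: emeasure_eq_ennreal_measure)
  ultimately show ?thesis using \<open>0 < k\<close>
    by (metis ennreal_zero_less_mult_iff ennreal_less_zero_iff less_le_trans)
qed

theorem lemma3p3:
  fixes P :: "'a::euclidean_space measure"
    and p :: "'a \<Rightarrow> real"
    and lam Lam :: real
    and \<psi> :: "'a \<Rightarrow> real"
  assumes "prob_space P"
    and "p \<in> borel_measurable lborel"
    and "P = density lborel (\<lambda>x. ennreal (p x))"
    and "compact (msupport P)" and "convex (msupport P)"
    and "interior (msupport P) \<noteq> {}"
    and "0 < lam" and "lam \<le> Lam"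
    and "\<And>x. x \<in> msupport P \<Longrightarrow> lam \<le> p x \<and> p x \<le> Lam"
    and "convex_on (ball 0 1) \<psi>" and "lsc_on (ball 0 1) \<psi>" and "\<psi> 0 = 0"
    and "AE u in spherical_uniform. \<psi> differentiable (at u)"
    and "distr spherical_uniform borel (grad \<psi>) = P"
  shows "((\<lambda>R. hausdorff_dist (grad \<psi> ` {u \<in> ball 0 R. \<psi> differentiable (at u)})
                               (msupport P)) \<longlongrightarrow> 0) (at_left 1)"
proof (rule hausdorff_dist_image_ball_tendsto)
  let ?U = "spherical_uniform :: 'a measure" and ?X = "msupport P"
  have "sets P = sets borel" using assms(3) by simp
  have "AE u in ?U. grad \<psi> u \<in> ?X"
  proof (rule AE_vimage_distr)
    show "prob_space (distr ?U borel (grad \<psi>))" using assms(1,14) by simp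
    show "?X \<in> sets borel" using compact_imp_closed[OF assms(4)] by simp
    show "AE y in distr ?U borel (grad \<psi>). y \<in> ?X"
      unfolding assms(14) using \<open>sets P = sets borel\<close> by (rule AE_in_msupport)
  qed simp
  then have good: "AE u in ?U. u \<in> ball 0 1 \<and> \<psi> differentiable (at u) \<and> grad \<psi> u \<in> ?X"
    using AE_spherical_uniform_ball assms(13) by eventually_elim auto
  have "\<exists>w\<in>ball c r. \<psi> differentiable (at w) \<and> grad \<psi> w \<in> ?X"
    if "0 < r" "ball c r \<subseteq> ball 0 1" for c r
    using AE_imp_ex_in_pos_emeasure[OF good emeasure_spherical_uniform_ball_pos[OF that]] by blast
  then show "grad \<psi> u \<in> ?X" if "norm u < 1" "\<psi> differentiable (at u)" for u
    using that assms(4,5,10) by (intro convex_on_grad_in_compact_convex[of "ball 0 1"]) auto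
  show "\<exists>w. norm w < 1 \<and> \<psi> differentiable (at w) \<and> dist x (grad \<psi> w) < e"
    if "x \<in> ?X" "0 < e" for x e
  proof -
    have "0 < emeasure P (ball x e)" using that unfolding msupport_def by blast
    also have "emeasure P (ball x e) = emeasure ?U (grad \<psi> -` ball x e)"
      using emeasure_distr_nonmeasurable[of ?U borel "grad \<psi>" "ball x e"]
        assms(14) prob_space.emeasure_space_1[OF assms(1)] assms(3) by simp
    finally show ?thesis using AE_imp_ex_in_pos_emeasure[OF good] by fastforce
  qed
qed (use assms(4,6) interior_subset in auto)

end
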